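(* Let $(f,g),(f',g')\in\Theta$ both satisfy the diversity condition and satisfy $p_{f,g}(y\mid x)=p_{f',g'}(y\mid x)$ for all $(x,y)\in\mathcal X\times\mathcal Y$. Then for any two choices of pivot and subset, $(\tilde y,\mathcal J)$ and $(\hat y,\mathcal K)$ with $\mathcal J\subseteq\mathcal Y\setminus\{\tilde y\}$, $\mathcal K\subseteq\mathcal Y\setminus\{\hat y\}$, $|\mathcal J|=|\mathcal K|=m$, such that the corresponding shifted unembedding matrices $\tilde L_{\mathcal J}$ and $\hat L_{\mathcal K}$ of $(f,g)$ are invertible, one has $$\tilde L_{\mathcal J}^{-\top}\tilde L_{\mathcal J}'^{\top}=\hat L_{\mathcal K}^{-\top}\hat L_{\mathcal K}'^{\top}.$$
   Context: Model class $\Theta$: pairs $(f,g)$, $f:\mathcal X\to\mathbb R^m$, $g:\mathcal Y\to\mathbb R^m$, $\mathcal Y$ finite with $k>m$ labels, $\sum_y g(y)=0$, inducing $p_{f,g}(y\mid x)\propto\exp(f(x)^\top g(y))$; $p_x$ is the data distribution. Logits $u(x)=(f(x)^\top g(y))_{y\in\mathcal Y}$. Diversity condition: $\dim\mathrm{span}\{u(x):x\in\mathrm{supp}(p_x)\}=m$. For a pivot $\tilde y$ and $\mathcal J=\{y_1,\dots,y_m\}\subseteq\mathcal Y\setminus\{\tilde y\}$, $\tilde L_{\mathcal J}=(g(y_1)-g(\tilde y)\ \cdots\ g(y_m)-g(\tilde y))\in\mathbb R^{m\times m}$; $\tilde L'_{\mathcal J}$ is defined in the same way from $g'$; $\hat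 L_{\mathcal K},\hat L'_{\mathcal K}$ likewise for pivot $\hat y$ and subset $\mathcal K$. *)

theory Defs
  imports "HOL-Analysis.Analysis"
begin

definition in_Theta :: "('x \<Rightarrow> real^'m) \<Rightarrow> ('y::finite \<Rightarrow> real^'m) \<Rightarrow> bool" where
  "in_Theta f g \<longleftrightarrow> CARD('y) > CARD('m) \<and> (\<Sum>y\<in>UNIV. g y) = 0"

definition cond_prob :: "('x \<Rightarrow> real^'m) \<Rightarrow> ('y::finite \<Rightarrow> real^'m) \<Rightarrow> 'x \<Rightarrow> 'y \<Rightarrow> real" where
  "cond_prob f g x y = exp (f x \<bullet> g y) / (\<Sum>y'\<in>UNIV. exp (f x \<bullet> g y'))"

definition logits :: "('x \<Rightarrow> real^'m) \<Rightarrow> ('y::finite \<Rightarrow> real^'m) \<Rightarrow> 'x \<Rightarrow> real^'y" where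
  "logits f g x = (\<chi> y. f x \<bullet> g y)"

text \<open>Diversity condition relative to the support S of the data distribution p_x.\<close>
definition diverse :: "'x set \<Rightarrow> ('x \<Rightarrow> real^'m) \<Rightarrow> ('y::finite \<Rightarrow> real^'m) \<Rightarrow> bool" where
  "diverse S f g \<longleftrightarrow> dim (span (logits f g ` S)) = CARD('m)"

text \<open>Shifted unembedding matrix for pivot yp and the ordered subset J = {j 1, ..., j m}:
  column c is g(j c) - g(yp).\<close>
definition shifted_unemb :: "('y \<Rightarrow> real^'m) \<Rightarrow> 'y \<Rightarrow> ('m \<Rightarrow> 'y) \<Rightarrow> real^'m^'m" where
  "shifted_unemb g yp j = (\<chi> r c. (g (j c) - g yp) $ r)"

end

theory Submission
  imports Defs
begin

text \<open>Equal softmax distributions have equal log-ratios, so the logit differences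
  \<open>f x \<bullet> (g y - g y\<^sub>0)\<close> and \<open>f' x \<bullet> (g' y - g' y\<^sub>0)\<close> agree for every pivot \<open>y\<^sub>0\<close>.
  For a pivot and subset with invertible \<open>L\<close> this reads \<open>L\<^sup>T f x = L'\<^sup>T f' x\<close>, i.e.
  \<open>L\<^sup>-\<^sup>T L'\<^sup>T\<close> maps \<open>f' x\<close> to \<open>f x\<close> for every \<open>x\<close>. By diversity of \<open>(f', g')\<close> the
  vectors \<open>f' x\<close>, \<open>x \<in> S\<close>, span \<open>\<real>\<^sup>m\<close>, so this matrix does not depend on the choice
  of pivot and subset. Besides equal probabilities, only the diversity of \<open>(f', g')\<close> and the
  invertibility of the two matrices are needed.\<close>

lemma matrix_inv_right:
  fixes A :: "'a::semiring_1^'n^'m"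
  assumes "invertible A"
  shows "A ** matrix_inv A = mat 1"
  using someI_ex[OF assms[unfolded invertible_def]] unfolding matrix_inv_def by blast

lemma transpose_matrix_inv_left:
  fixes A :: "'a::comm_semiring_1^'n^'m"
  assumes "invertible A"
  shows "transpose (matrix_inv A) ** transpose A = mat 1"
  by (metis matrix_inv_right[OF assms] matrix_transpose_mul transpose_mat)

lemma matrix_eq_on_spanning_set:
  fixes A B :: "real^'n^'m"
  assumes "span X = UNIV" and "\<And>x. x \<in> X \<Longrightarrow> A *v x = B *v x"
  shows "A = B"
proof -
  have "A *v v = B *v v" for v
    using linear_eq_on_span[of "(*v) A" "(*v) B" X v] assms by auto
  then show ?thesis by (simp add: matrix_eq)
qed

lemma ln_cond_prob:
  "ln (cond_prob f g x y) = f x \<bullet> g y - ln (\<Sum>y'\<in>UNIV. exp (f x \<bullet> g y'))"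
proof -
  have "(\<Sum>y'\<in>UNIV. exp (f x \<bullet> g y')) > 0" by (rule sum_pos) auto
  then show ?thesis by (simp add: cond_prob_def ln_div)
qed

lemma cond_prob_eq_imp_logit_diff_eq:
  assumes "cond_prob f g x = cond_prob f' g' x"
  shows "f x \<bullet> (g y - g z) = f' x \<bullet> (g' y - g' z)"
  using arg_cong[OF assms, of "\<lambda>p. ln (p y) - ln (p z)"]
  by (simp add: ln_cond_prob inner_diff_right)

lemma transpose_shifted_unemb_mult:
  "transpose (shifted_unemb g yp J) *v v = (\<chi> c. (g (J c) - g yp) \<bullet> v)"
  by (simp add: vec_eq_iff matrix_vector_mult_def transpose_def shifted_unemb_def
      inner_vec_def mult.commute)

lemma shifted_unemb_maps_embeddings:
  fixes f f' :: "'x \<Rightarrow> real^'m" and g g' :: "'y::finite \<Rightarrow> real^'m"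
  assumes "cond_prob f g x = cond_prob f' g' x"
    and "invertible (shifted_unemb g yp J)"
  shows "(transpose (matrix_inv (shifted_unemb g yp J)) ** transpose (shifted_unemb g' yp J))
           *v f' x = f x"
proof -
  let ?L = "shifted_unemb g yp J" and ?L' = "shifted_unemb g' yp J"
  have logits_eq: "transpose ?L' *v f' x = transpose ?L *v f x"
  proof -
    have "(g' (J c) - g' yp) \<bullet> f' x = (g (J c) - g yp) \<bullet> f x" for c
      using cond_prob_eq_imp_logit_diff_eq[OF assms(1)] by (metis inner_commute)
    then show ?thesis
      unfolding transpose_shifted_unemb_mult by simp
  qed
  have "(transpose (matrix_inv ?L) ** transpose ?L') *v f' x
          = (transpose (matrix_inv ?L) ** transpose ?L) *v f x"
    by (simp only: matrix_vector_mul_assoc[symmetric] logits_eq)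
  also have "\<dots> = f x"
    by (simp only: transpose_matrix_inv_left[OF assms(2)] matrix_vector_mul_lid)
  finally show ?thesis .
qed

lemma span_embeddings_eq_UNIV_if_diverse:
  fixes f :: "'x \<Rightarrow> real^'m" and g :: "'y::finite \<Rightarrow> real^'m"
  assumes "diverse S f g"
  shows "span (f ` S) = UNIV"
proof -
  define h where "h = (\<lambda>v::real^'m. (\<chi> y. v \<bullet> g y) :: real^'y)"
  have "linear h" unfolding h_def
    by (rule linearI) (simp_all add: vec_eq_iff inner_add_left)
  have "logits f g ` S = h ` f ` S" unfolding logits_def h_def by auto
  then have "CARD('m) = dim (h ` f ` S)"
    using assms unfolding diverse_def by (simp add: dim_span)
  also have "\<dots> \<le> dim (f ` S)" using \<open>linear h\<close> by (rule dim_image_le)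
  finally have "dim (f ` S) = DIM(real^'m)"
    using dim_subset_UNIV_cart[of "f ` S"] by simp
  then show ?thesis by (simp only: dim_eq_full)
qed

theorem mainTheorem10:
  fixes S :: "'x set"
    and f f' :: "'x \<Rightarrow> real^'m"
    and g g' :: "'y::finite \<Rightarrow> real^'m"
    and yt yh :: 'y
    and J K :: "'m \<Rightarrow> 'y"
  assumes "in_Theta f g" and "in_Theta f' g'"
    and "diverse S f g" and "diverse S f' g'"
    and "\<And>x y. cond_prob f g x y = cond_prob f' g' x y"
    and "inj J" and "yt \<notin> range J"
    and "inj K" and "yh \<notin> range K"
    and "invertible (shifted_unemb g yt J)"
    and "invertible (shifted_unemb g yh K)"
  shows "transpose (matrix_inv (shifted_unemb g yt J)) ** transpose (shifted_unemb g' yt J)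
       = transpose (matrix_inv (shifted_unemb g yh K)) ** transpose (shifted_unemb g' yh K)"
    (is "?A = ?B")
proof (rule matrix_eq_on_spanning_set)
  have same_prob: "cond_prob f g x = cond_prob f' g' x" for x
    using assms(5) by blast
  show "span (f' ` S) = UNIV"
    using assms(4) by (rule span_embeddings_eq_UNIV_if_diverse)
  fix v assume "v \<in> f' ` S"
  then show "?A *v v = ?B *v v"
    using shifted_unemb_maps_embeddings[OF same_prob assms(10)]
      shifted_unemb_maps_embeddings[OF same_prob assms(11)] by auto
qed

end
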